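(* Let $(X,d)$ be a bounded ultrametric space. Then the metric $d(x,y)$ has the strong Erdős–Hajnal property: for every $\varepsilon>0$ there is $\delta>0$ such that for all finite $A,B\subseteq X$ there are $A_0\subseteq A$, $B_0\subseteq B$ with $|A_0|\geq\delta|A|$, $|B_0|\geq\delta|B|$ and $|d(a,b)-d(a',b')|\leq\varepsilon$ for all $a,a'\in A_0$, $b,b'\in B_0$. *)

theory Defs
  imports "HOL-Analysis.Analysis"
begin

definition metric_on :: "'a set \<Rightarrow> ('a \<Rightarrow> 'a \<Rightarrow> real) \<Rightarrow> bool" where
  "metric_on X d \<longleftrightarrow>
     (\<forall>x\<in>X. \<forall>y\<in>X. d x y \<ge> 0 \<and> (d x y = 0 \<longleftrightarrow> x = y) \<and> d x y = d y x) \<and>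
     (\<forall>x\<in>X. \<forall>y\<in>X. \<forall>z\<in>X. d x z \<le> d x y + d y z)"

definition ultrametric_on :: "'a set \<Rightarrow> ('a \<Rightarrow> 'a \<Rightarrow> real) \<Rightarrow> bool" where
  "ultrametric_on X d \<longleftrightarrow> metric_on X d \<and>
     (\<forall>x\<in>X. \<forall>y\<in>X. \<forall>z\<in>X. d x z \<le> max (d x y) (d y z))"

definition bounded_metric_on :: "'a set \<Rightarrow> ('a \<Rightarrow> 'a \<Rightarrow> real) \<Rightarrow> bool" where
  "bounded_metric_on X d \<longleftrightarrow> (\<exists>M. \<forall>x\<in>X. \<forall>y\<in>X. d x y \<le> M)"

definition strong_EH :: "'a set \<Rightarrow> ('a \<Rightarrow> 'a \<Rightarrow> real) \<Rightarrow> bool" where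
  "strong_EH X f \<longleftrightarrow>
     (\<forall>\<epsilon>>0. \<exists>\<delta>>0. \<forall>A B. finite A \<and> finite B \<and> A \<subseteq> X \<and> B \<subseteq> X \<longrightarrow>
        (\<exists>A0 B0. A0 \<subseteq> A \<and> B0 \<subseteq> B \<and>
           real (card A0) \<ge> \<delta> * real (card A) \<and> real (card B0) \<ge> \<delta> * real (card B) \<and>
           (\<forall>a\<in>A0. \<forall>a'\<in>A0. \<forall>b\<in>B0. \<forall>b'\<in>B0. \<bar>f a b - f a' b'\<bar> \<le> \<epsilon>)))"

end

theory Submission
  imports Defs
begin

text \<open>
  For \<open>r \<ge> 0\<close> the closed \<open>r\<close>-balls of an ultrametric space partition it, and points in different
  balls are at distance \<open>> r\<close>. Given finite \<open>A\<close> and \<open>B\<close>, either one ball contains a quarter of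
  \<open>A\<close>, or a union of balls contains between a quarter and three quarters of \<open>A\<close>; in both cases
  comparing with how \<open>B\<close> splits along that union yields \<open>A' \<subseteq> A\<close>, \<open>B' \<subseteq> B\<close> of at least a
  quarter of the size such that all distances between them are \<open>\<le> r\<close>, or all are \<open>> r\<close>.
  If all distances lie in \<open>[0, n\<epsilon>]\<close>, apply this with \<open>r = (n - 1)\<epsilon>\<close>: either the distances
  now lie in the top layer \<open>((n - 1)\<epsilon>, n\<epsilon>]\<close>, or we recurse with \<open>n - 1\<close>.
  This gives \<open>\<delta> = 4\<^sup>-\<^sup>n\<close> with \<open>n\<epsilon>\<close> bounding the diameter.
\<close>

lemma card_UN_subfamily_between:
  assumes "finite I" "\<And>i. i \<in> I \<Longrightarrow> card (F i) \<le> c" "t \<le> card (\<Union>i\<in>I. F i)"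
  shows "\<exists>J\<subseteq>I. t \<le> card (\<Union>i\<in>J. F i) \<and> card (\<Union>i\<in>J. F i) \<le> t + c"
  using assms
proof (induction I rule: finite_induct)
  case empty
  then show ?case by simp
next
  case (insert i I)
  show ?case
  proof (cases "t \<le> card (\<Union>i\<in>I. F i)")
    case True
    with insert show ?thesis by blast
  next
    case False
    have "card (\<Union>i\<in>insert i I. F i) \<le> card (F i) + card (\<Union>i\<in>I. F i)"
      using card_Un_le by simp
    also have "\<dots> \<le> t + c"
      using False insert.prems(1) by (simp add: add.commute add_mono)
    finally show ?thesis
      using insert.prems(2) by blast
  qed
qed

lemma exists_balanced_union_of_neighbourhoods:
  assumes "finite A" "\<And>x. x \<in> A \<Longrightarrow> x \<in> N x" "\<And>x. x \<in> A \<Longrightarrow> 4 * card (A \<inter> N x) < card A"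
  obtains S where "S \<subseteq> A" "card A \<le> 4 * card (A \<inter> (\<Union>s\<in>S. N s))"
    "card A \<le> 4 * card (A - (\<Union>s\<in>S. N s))"
proof (cases "A = {}")
  case True
  then show thesis by (intro that[of "{}"]) auto
next
  case False
  then obtain a where a: "a \<in> A" by blast
  \<comment> \<open>Stop adding neighbourhoods once \<open>t = \<lceil>card A / 4\<rceil>\<close> points are covered; as each one
    covers at most \<open>c < card A / 4\<close> points, at most \<open>t + c \<le> 3 card A / 4\<close> are then covered.\<close>
  define c where "c = (card A - 1) div 4"
  define t where "t = (card A + 3) div 4"
  have "1 \<le> card (A \<inter> N a)"
    using a assms(1,2) by (metis IntI card_0_eq empty_iff finite_Int less_one not_less)
  with assms(3)[OF a] have "5 \<le> card A" by linarith
  then have "card A \<le> 4 * t" "4 * (t + c) + card A \<le> 4 * card A"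
    unfolding t_def c_def by presburger+
  have small: "card (A \<inter> N x) \<le> c" if "x \<in> A" for x
    using assms(3)[OF that] unfolding c_def by presburger
  have "(\<Union>x\<in>A. A \<inter> N x) = A"
    using assms(2) by blast
  moreover have "t \<le> card A"
    unfolding t_def by presburger
  ultimately obtain S where S: "S \<subseteq> A" "t \<le> card (\<Union>s\<in>S. A \<inter> N s)"
    "card (\<Union>s\<in>S. A \<inter> N s) \<le> t + c"
    using card_UN_subfamily_between[of A "\<lambda>x. A \<inter> N x" c t] small assms(1) by auto
  note S = S[folded Int_UN_distrib]
  define U where "U = (\<Union>s\<in>S. N s)"
  have "card A \<le> 4 * card (A \<inter> U)"
    using S(2) \<open>card A \<le> 4 * t\<close> unfolding U_def by linarith
  moreover have "card A \<le> 4 * card (A - U)"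
    using card_Int_Diff[OF assms(1), of U] S(3) \<open>4 * (t + c) + card A \<le> 4 * card A\<close>
    unfolding U_def by presburger
  ultimately show thesis
    using that[OF S(1)] unfolding U_def by blast
qed

lemma ultrametric_on_imp_metric_on: "ultrametric_on X d \<Longrightarrow> metric_on X d"
  unfolding ultrametric_on_def by blast

lemma metric_on_nonneg: "metric_on X d \<Longrightarrow> x \<in> X \<Longrightarrow> y \<in> X \<Longrightarrow> 0 \<le> d x y"
  unfolding metric_on_def by blast

lemma metric_on_self: "metric_on X d \<Longrightarrow> x \<in> X \<Longrightarrow> d x x = 0"
  unfolding metric_on_def by blast

lemma metric_on_sym: "metric_on X d \<Longrightarrow> x \<in> X \<Longrightarrow> y \<in> X \<Longrightarrow> d x y = d y x"
  unfolding metric_on_def by blast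

lemma ultrametric_on_le_trans:
  assumes "ultrametric_on X d" "x \<in> X" "y \<in> X" "z \<in> X" "d x y \<le> r" "d y z \<le> r"
  shows "d x z \<le> r"
  using assms unfolding ultrametric_on_def by (meson max.boundedI order.trans)

lemma ultrametric_on_gt_if_separated:
  assumes "ultrametric_on X d" "s \<in> X" "a \<in> X" "b \<in> X" "d s a \<le> r" "\<not> d s b \<le> r"
  shows "r < d a b"
  using ultrametric_on_le_trans[of X d s a b r] assms by force

lemma ultrametric_on_far_pair_across_union_of_balls:
  fixes r :: real
  assumes um: "ultrametric_on X d" and "finite B" "S \<subseteq> X" "A \<subseteq> X" "B \<subseteq> X"
    and U: "U = (\<Union>s\<in>S. {y. d s y \<le> r})"
  obtains (B_inside) "card B \<le> 2 * card (B \<inter> U)" "\<forall>a\<in>A - U. \<forall>b\<in>B \<inter> U. r < d a b"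
    | (B_outside) "card B \<le> 2 * card (B - U)" "\<forall>a\<in>A \<inter> U. \<forall>b\<in>B - U. r < d a b"
proof -
  have far: "r < d a b" if "a \<in> X \<inter> U" "b \<in> X - U" for a b
    using that \<open>S \<subseteq> X\<close> ultrametric_on_gt_if_separated[OF um] unfolding U by blast
  have "\<forall>a\<in>A - U. \<forall>b\<in>B \<inter> U. r < d a b"
  proof (intro ballI)
    fix a b
    assume "a \<in> A - U" "b \<in> B \<inter> U"
    with assms(4,5) have "r < d b a" "a \<in> X" "b \<in> X"
      by (auto intro: far)
    then show "r < d a b"
      using metric_on_sym[OF ultrametric_on_imp_metric_on[OF um]] by simp
  qed
  moreover have "\<forall>a\<in>A \<inter> U. \<forall>b\<in>B - U. r < d a b"
    using far assms(4,5) by blast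
  moreover have "card B \<le> 2 * card (B \<inter> U) \<or> card B \<le> 2 * card (B - U)"
    using card_Int_Diff[OF \<open>finite B\<close>, of U] by linarith
  ultimately show thesis
    using that by blast
qed

lemma ultrametric_on_ball_close_or_far_pair:
  fixes r :: real
  assumes um: "ultrametric_on X d" and "finite B" "x \<in> X" "A \<subseteq> X" "B \<subseteq> X"
  obtains B' where "B' \<subseteq> B" "card B \<le> 2 * card B'"
    "(\<forall>a\<in>A \<inter> {y. d x y \<le> r}. \<forall>b\<in>B'. d a b \<le> r) \<or>
     (\<forall>a\<in>A \<inter> {y. d x y \<le> r}. \<forall>b\<in>B'. r < d a b)"
proof -
  define U where "U = {y. d x y \<le> r}"
  have centre: "{x} \<subseteq> X" and U: "U = (\<Union>s\<in>{x}. {y. d s y \<le> r})"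
    using \<open>x \<in> X\<close> by (auto simp: U_def)
  from um \<open>finite B\<close> centre assms(4,5) U show thesis
  proof (cases rule: ultrametric_on_far_pair_across_union_of_balls)
    case B_inside
    have "d a b \<le> r" if "a \<in> A \<inter> U" "b \<in> B \<inter> U" for a b
    proof -
      have "a \<in> X" "b \<in> X"
        using that assms(4,5) by auto
      with that \<open>x \<in> X\<close> show ?thesis
        using ultrametric_on_le_trans[OF um, of a x b r]
          metric_on_sym[OF ultrametric_on_imp_metric_on[OF um], of x a]
        unfolding U_def by auto
    qed
    with B_inside show thesis
      by (intro that[of "B \<inter> U", folded U_def]) auto
  next
    case B_outside
    then show thesis
      by (intro that[of "B - U", folded U_def]) auto
  qed
qed

lemma ultrametric_on_large_close_or_far_pair:
  fixes r :: real
  assumes um: "ultrametric_on X d" and "0 \<le> r" "finite A" "finite B" "A \<subseteq> X" "B \<subseteq> X"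
  obtains A' B' where "A' \<subseteq> A" "B' \<subseteq> B" "card A \<le> 4 * card A'" "card B \<le> 4 * card B'"
    "(\<forall>a\<in>A'. \<forall>b\<in>B'. d a b \<le> r) \<or> (\<forall>a\<in>A'. \<forall>b\<in>B'. r < d a b)"
proof -
  define ball where "ball x = {y. d x y \<le> r}" for x
  show thesis
  proof (cases "\<exists>x\<in>A. card A \<le> 4 * card (A \<inter> ball x)")
    case True
    then obtain x where x: "x \<in> A" "card A \<le> 4 * card (A \<inter> ball x)"
      by blast
    with assms(5) obtain B' where "B' \<subseteq> B" "card B \<le> 2 * card B'"
      "(\<forall>a\<in>A \<inter> ball x. \<forall>b\<in>B'. d a b \<le> r) \<or> (\<forall>a\<in>A \<inter> ball x. \<forall>b\<in>B'. r < d a b)"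
      using ultrametric_on_ball_close_or_far_pair[OF um \<open>finite B\<close> _ assms(5,6)]
      unfolding ball_def by blast
    with x(2) show thesis
      by (intro that[of "A \<inter> ball x" B']) auto
  next
    case False
    have "x \<in> ball x" if "x \<in> A" for x
      using that assms(2,5) metric_on_self[OF ultrametric_on_imp_metric_on[OF um]]
      unfolding ball_def by auto
    with False obtain S where S: "S \<subseteq> A" "card A \<le> 4 * card (A \<inter> (\<Union>s\<in>S. ball s))"
      "card A \<le> 4 * card (A - (\<Union>s\<in>S. ball s))"
      using exists_balanced_union_of_neighbourhoods[OF \<open>finite A\<close>, of ball] by force
    have centres: "S \<subseteq> X" and U: "(\<Union>s\<in>S. ball s) = (\<Union>s\<in>S. {y. d s y \<le> r})"
      using S(1) assms(5) by (auto simp: ball_def)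
    from um \<open>finite B\<close> centres assms(5,6) U show thesis
    proof (cases rule: ultrametric_on_far_pair_across_union_of_balls)
      case B_inside
      with S(3) show thesis
        by (intro that[of "A - (\<Union>s\<in>S. ball s)" "B \<inter> (\<Union>s\<in>S. ball s)"]) auto
    next
      case B_outside
      with S(2) show thesis
        by (intro that[of "A \<inter> (\<Union>s\<in>S. ball s)" "B - (\<Union>s\<in>S. ball s)"]) auto
    qed
  qed
qed

lemma ultrametric_on_large_pair_in_short_interval:
  fixes \<epsilon> :: real
  assumes um: "ultrametric_on X d" and "0 \<le> \<epsilon>"
    and "finite A" "finite B" "A \<subseteq> X" "B \<subseteq> X" "\<forall>a\<in>A. \<forall>b\<in>B. d a b \<le> n * \<epsilon>"
  shows "\<exists>A0\<subseteq>A. \<exists>B0\<subseteq>B. \<exists>lo. card A \<le> 4 ^ n * card A0 \<and> card B \<le> 4 ^ n * card B0 \<and>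
           (\<forall>a\<in>A0. \<forall>b\<in>B0. lo \<le> d a b \<and> d a b \<le> lo + \<epsilon>)"
  using assms(3-)
proof (induction n arbitrary: A B)
  case 0
  have "0 \<le> d a b \<and> d a b \<le> 0 + \<epsilon>" if "a \<in> A" "b \<in> B" for a b
    using metric_on_nonneg[OF ultrametric_on_imp_metric_on[OF um]] 0 \<open>0 \<le> \<epsilon>\<close> that
    by (metis add_0 mult_zero_left of_nat_0 order.trans subsetD)
  then show ?case
    by (intro exI[of _ A] conjI exI[of _ B] exI[of _ 0]) auto
next
  case (Suc n)
  have "0 \<le> n * \<epsilon>"
    using \<open>0 \<le> \<epsilon>\<close> by simp
  obtain A' B' where A'B': "A' \<subseteq> A" "B' \<subseteq> B" "card A \<le> 4 * card A'" "card B \<le> 4 * card B'"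
    and dichotomy: "(\<forall>a\<in>A'. \<forall>b\<in>B'. d a b \<le> n * \<epsilon>) \<or> (\<forall>a\<in>A'. \<forall>b\<in>B'. n * \<epsilon> < d a b)"
    by (rule ultrametric_on_large_close_or_far_pair[OF um \<open>0 \<le> n * \<epsilon>\<close> Suc.prems(1-4)])
  have "finite A'" "finite B'" "A' \<subseteq> X" "B' \<subseteq> X"
    using A'B'(1,2) Suc.prems(1-4) finite_subset by blast+
  from dichotomy show ?case
  proof
    assume "\<forall>a\<in>A'. \<forall>b\<in>B'. d a b \<le> n * \<epsilon>"
    then obtain A0 B0 lo where A0B0: "A0 \<subseteq> A'" "B0 \<subseteq> B'" "card A' \<le> 4 ^ n * card A0"
      "card B' \<le> 4 ^ n * card B0" "\<forall>a\<in>A0. \<forall>b\<in>B0. lo \<le> d a b \<and> d a b \<le> lo + \<epsilon>"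
      using Suc.IH[OF \<open>finite A'\<close> \<open>finite B'\<close> \<open>A' \<subseteq> X\<close> \<open>B' \<subseteq> X\<close>] by blast
    have "card A \<le> 4 ^ Suc n * card A0" "card B \<le> 4 ^ Suc n * card B0"
      using A'B'(3,4) A0B0(3,4) by simp_all
    moreover have "A0 \<subseteq> A" "B0 \<subseteq> B"
      using A'B'(1,2) A0B0(1,2) by auto
    ultimately show ?case
      using A0B0(5) by blast
  next
    assume far: "\<forall>a\<in>A'. \<forall>b\<in>B'. n * \<epsilon> < d a b"
    have "\<forall>a\<in>A'. \<forall>b\<in>B'. n * \<epsilon> \<le> d a b \<and> d a b \<le> n * \<epsilon> + \<epsilon>"
    proof (intro ballI conjI)
      fix a b assume "a \<in> A'" "b \<in> B'"
      then show "n * \<epsilon> \<le> d a b"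
        using far by (simp add: less_imp_le)
      have "d a b \<le> Suc n * \<epsilon>"
        using Suc.prems(5) A'B'(1,2) \<open>a \<in> A'\<close> \<open>b \<in> B'\<close> by blast
      then show "d a b \<le> n * \<epsilon> + \<epsilon>"
        by (simp add: algebra_simps)
    qed
    moreover have "(4::nat) \<le> 4 ^ Suc n"
      using one_le_power[of "4::nat" n] by simp
    then have "card A \<le> 4 ^ Suc n * card A'" "card B \<le> 4 ^ Suc n * card B'"
      using A'B'(3,4) mult_le_mono1 order.trans by blast+
    ultimately show ?case
      using A'B'(1,2) by blast
  qed
qed

lemma ultrametric_on_large_pair_of_small_oscillation:
  fixes \<epsilon> :: real
  assumes "ultrametric_on X d" "0 \<le> \<epsilon>" "\<forall>x\<in>X. \<forall>y\<in>X. d x y \<le> n * \<epsilon>"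
    and AB: "finite A" "finite B" "A \<subseteq> X" "B \<subseteq> X"
  shows "\<exists>A0 B0. A0 \<subseteq> A \<and> B0 \<subseteq> B \<and>
           real (card A0) \<ge> 1 / 4 ^ n * real (card A) \<and> real (card B0) \<ge> 1 / 4 ^ n * real (card B) \<and>
           (\<forall>a\<in>A0. \<forall>a'\<in>A0. \<forall>b\<in>B0. \<forall>b'\<in>B0. \<bar>d a b - d a' b'\<bar> \<le> \<epsilon>)"
proof -
  have "\<forall>a\<in>A. \<forall>b\<in>B. d a b \<le> n * \<epsilon>"
    using assms(3) AB(3,4) by blast
  from ultrametric_on_large_pair_in_short_interval[OF assms(1,2) AB this]
  obtain A0 B0 lo where "A0 \<subseteq> A" "B0 \<subseteq> B"
    "card A \<le> 4 ^ n * card A0" "card B \<le> 4 ^ n * card B0"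
    and lo: "\<forall>a\<in>A0. \<forall>b\<in>B0. lo \<le> d a b \<and> d a b \<le> lo + \<epsilon>"
    by blast
  have "\<bar>d a b - d a' b'\<bar> \<le> \<epsilon>" if "a \<in> A0" "a' \<in> A0" "b \<in> B0" "b' \<in> B0" for a a' b b'
    using lo that by (smt (verit))
  moreover have "1 / 4 ^ n * real (card C) \<le> real (card C0)" if "card C \<le> 4 ^ n * card C0"
    for C C0 :: "'a set"
    using of_nat_mono[OF that, where 'a = real] by (simp add: field_simps)
  ultimately show ?thesis
    using \<open>A0 \<subseteq> A\<close> \<open>B0 \<subseteq> B\<close> \<open>card A \<le> 4 ^ n * card A0\<close> \<open>card B \<le> 4 ^ n * card B0\<close>
    by blast
qed

lemma bounded_metric_on_le_nat_multiple:
  fixes \<epsilon> :: real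
  assumes "bounded_metric_on X d" "0 < \<epsilon>"
  obtains n :: nat where "\<forall>x\<in>X. \<forall>y\<in>X. d x y \<le> n * \<epsilon>"
proof -
  obtain M where M: "\<forall>x\<in>X. \<forall>y\<in>X. d x y \<le> M"
    using assms(1) unfolding bounded_metric_on_def by blast
  obtain n :: nat where "M / \<epsilon> \<le> n"
    using real_arch_simple by blast
  with \<open>0 < \<epsilon>\<close> have "M \<le> n * \<epsilon>"
    by (simp add: divide_le_eq)
  with M have "\<forall>x\<in>X. \<forall>y\<in>X. d x y \<le> n * \<epsilon>"
    by (meson order.trans)
  then show thesis
    by (rule that)
qed

theorem mainTheorem13:
  fixes X :: "'a set" and d :: "'a \<Rightarrow> 'a \<Rightarrow> real"
  assumes "ultrametric_on X d" and "bounded_metric_on X d"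
  shows "strong_EH X d"
  unfolding strong_EH_def
proof (intro allI impI)
  fix \<epsilon> :: real
  assume "0 < \<epsilon>"
  with assms(2) obtain n :: nat where "\<forall>x\<in>X. \<forall>y\<in>X. d x y \<le> n * \<epsilon>"
    by (rule bounded_metric_on_le_nat_multiple)
  note large_pair = ultrametric_on_large_pair_of_small_oscillation[OF assms(1) less_imp_le[OF \<open>0 < \<epsilon>\<close>] this]
  show "\<exists>\<delta>>0. \<forall>A B. finite A \<and> finite B \<and> A \<subseteq> X \<and> B \<subseteq> X \<longrightarrow>
      (\<exists>A0 B0. A0 \<subseteq> A \<and> B0 \<subseteq> B \<and>
        real (card A0) \<ge> \<delta> * real (card A) \<and> real (card B0) \<ge> \<delta> * real (card B) \<and>
        (\<forall>a\<in>A0. \<forall>a'\<in>A0. \<forall>b\<in>B0. \<forall>b'\<in>B0. \<bar>d a b - d a' b'\<bar> \<le> \<epsilon>))"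
    using large_pair by (intro exI[of _ "1 / 4 ^ n"]) simp
qed

end
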